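(* Let $X$ be a super $X$-set parameter and let $G$ be a graph of order $n$. Then: (1) $X(G)\le\underline{x_0}(G)\le x_0(G)$; (2) if $G$ has only one minimal $X$-set, then $X(G)=\underline{x_0}(G)=x_0(G)$; (3) if $G$ has more than one minimal $X$-set, then $\overline{X}(G)+1\le x_0(G)\le\min\{\overline{X}(G)+X(G),\,n\}$; (4) if $G$ has more than one minimum $X$-set, then $X(G)+1\le\underline{x_0}(G)$.
   Context: All graphs are finite, simple, undirected, with nonempty vertex set. A super $X$-set parameter $X$ assigns to each graph $G$ a family of subsets of $V(G)$, called the $X$-sets of $G$, such that: every graph isomorphism maps $X$-sets to $X$-sets; every graph has at least one $X$-set; and (Superset) if $S$ is an $X$-set of $G$ and $S\subseteq S'\subseteq V(G)$, then $S'$ is an $X$-set of $G$. $X(G)$ is the minimum cardinality of an $X$-set; $\overline{X}(G)$ is the maximum cardinality of a minimal (w.r.t. inclusion) $X$-set. The $X$-TAR graph $\mathfrak{X}(G)$ has as vertices the $X$-sets of $G$, with $S_1S_2$ an edge iff $|S_1\ominus S_2|=1$. $\mathfrak{X}_k(G)$ is the subgraph of $\mathfrak{X}(G)$ induced by the $X$-sets of cardinality at most $k$ (a graph with no vertices is not regarded as connected). $x_0(G)$ is the least $k_0$ such that $\mathfrak{X}_k(G)$ is connected for all $k\ge k_0$, and $\underline{x_0}(G)$ is the least $k$ such that $\mathfrak{X}_k(G)$ is connected. *)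

theory Defs
  imports Main
begin

type_synonym 'a graph = "'a set \<times> 'a set set"

definition verts :: "'a graph \<Rightarrow> 'a set" where "verts G = fst G"
definition edges :: "'a graph \<Rightarrow> 'a set set" where "edges G = snd G"

definition is_graph :: "'a graph \<Rightarrow> bool" where
  "is_graph G \<longleftrightarrow> finite (verts G) \<and> verts G \<noteq> {} \<and>
     (\<forall>e\<in>edges G. \<exists>u v. u \<in> verts G \<and> v \<in> verts G \<and> u \<noteq> v \<and> e = {u, v})"

definition graph_iso :: "('a \<Rightarrow> 'a) \<Rightarrow> 'a graph \<Rightarrow> 'a graph \<Rightarrow> bool" where
  "graph_iso f G H \<longleftrightarrow> bij_betw f (verts G) (verts H) \<and>
     (\<forall>u\<in>verts G. \<forall>v\<in>verts G. {u, v} \<in> edges G \<longleftrightarrow> {f u, f v} \<in> edges H)"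

text \<open>Super X-set parameter: Xp G is the family of X-sets of G.\<close>
definition super_X_param :: "('a graph \<Rightarrow> 'a set set) \<Rightarrow> bool" where
  "super_X_param Xp \<longleftrightarrow>
     (\<forall>G. is_graph G \<longrightarrow> Xp G \<subseteq> Pow (verts G) \<and> Xp G \<noteq> {} \<and>
        (\<forall>S S'. S \<in> Xp G \<and> S \<subseteq> S' \<and> S' \<subseteq> verts G \<longrightarrow> S' \<in> Xp G)) \<and>
     (\<forall>G H f. is_graph G \<and> is_graph H \<and> graph_iso f G H \<longrightarrow>
        (\<forall>S\<in>Xp G. f ` S \<in> Xp H))"

definition Xnum :: "('a graph \<Rightarrow> 'a set set) \<Rightarrow> 'a graph \<Rightarrow> nat" where
  "Xnum Xp G = Min (card ` Xp G)"

definition minimal_Xset :: "('a graph \<Rightarrow> 'a set set) \<Rightarrow> 'a graph \<Rightarrow> 'a set \<Rightarrow> bool" where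
  "minimal_Xset Xp G S \<longleftrightarrow> S \<in> Xp G \<and> (\<forall>T\<in>Xp G. T \<subseteq> S \<longrightarrow> T = S)"

definition minimum_Xset :: "('a graph \<Rightarrow> 'a set set) \<Rightarrow> 'a graph \<Rightarrow> 'a set \<Rightarrow> bool" where
  "minimum_Xset Xp G S \<longleftrightarrow> S \<in> Xp G \<and> card S = Xnum Xp G"

definition Xupper :: "('a graph \<Rightarrow> 'a set set) \<Rightarrow> 'a graph \<Rightarrow> nat" where
  "Xupper Xp G = Max (card ` {S. minimal_Xset Xp G S})"

definition TAR_verts :: "('a graph \<Rightarrow> 'a set set) \<Rightarrow> 'a graph \<Rightarrow> nat \<Rightarrow> 'a set set" where
  "TAR_verts Xp G k = {S \<in> Xp G. card S \<le> k}"

definition TAR_adj :: "('a graph \<Rightarrow> 'a set set) \<Rightarrow> 'a graph \<Rightarrow> nat \<Rightarrow> 'a set \<Rightarrow> 'a set \<Rightarrow> bool" where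
  "TAR_adj Xp G k S1 S2 \<longleftrightarrow> S1 \<in> TAR_verts Xp G k \<and> S2 \<in> TAR_verts Xp G k \<and>
     card ((S1 - S2) \<union> (S2 - S1)) = 1"

definition TAR_connected :: "('a graph \<Rightarrow> 'a set set) \<Rightarrow> 'a graph \<Rightarrow> nat \<Rightarrow> bool" where
  "TAR_connected Xp G k \<longleftrightarrow> TAR_verts Xp G k \<noteq> {} \<and>
     (\<forall>S1\<in>TAR_verts Xp G k. \<forall>S2\<in>TAR_verts Xp G k. (TAR_adj Xp G k)\<^sup>*\<^sup>* S1 S2)"

definition x0 :: "('a graph \<Rightarrow> 'a set set) \<Rightarrow> 'a graph \<Rightarrow> nat" where
  "x0 Xp G = (LEAST k0. \<forall>k\<ge>k0. TAR_connected Xp G k)"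

definition x0_under :: "('a graph \<Rightarrow> 'a set set) \<Rightarrow> 'a graph \<Rightarrow> nat" where
  "x0_under Xp G = (LEAST k. TAR_connected Xp G k)"

end

theory Submission
  imports Defs
begin

text \<open>
  For
  \<open>k \<ge> n\<close> every X-set reaches the whole vertex set by adding vertices one at a time,
  so the TAR graphs are eventually connected and all thresholds are well defined.  A
  minimal X-set of size \<open>k\<close> is an isolated vertex of the TAR graph for \<open>k\<close>: deleting a
  vertex leaves the X-sets and adding one exceeds the size bound; this gives the lower
  bounds.  For the upper bounds, every X-set \<open>S\<close> shrinks to a minimal X-set \<open>A \<subseteq> S\<close>,
  which grows to \<open>A \<union> M\<close> and shrinks to a fixed minimum X-set \<open>M\<close>; this path stays
  within size \<open>Xupper + Xnum\<close>, and within size \<open>Xnum\<close> when \<open>M\<close> is the only minimal X-set.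
\<close>

lemma card_sym_diff_eq_1_cases:
  assumes "card ((A - B) \<union> (B - A)) = 1"
  obtains x where "x \<in> A" "B = A - {x}" | x where "x \<notin> A" "B = insert x A"
proof -
  obtain x where x: "(A - B) \<union> (B - A) = {x}" using assms by (rule card_1_singletonE)
  have in_B: "y \<in> B \<longleftrightarrow> (y \<in> A \<longleftrightarrow> y \<noteq> x)" for y
    using arg_cong[of _ _ "\<lambda>S. y \<in> S", OF x] by blast
  show thesis
  proof (cases "x \<in> A")
    case True
    then have "B = A - {x}" using in_B by auto
    with True that show thesis by simp
  next
    case False
    then have "B = insert x A" using in_B by auto
    with False that show thesis by simp
  qed
qed

locale superset_family =
  fixes Xp :: "'a graph \<Rightarrow> 'a set set" and G :: "'a graph"
  assumes finite_verts: "finite (verts G)"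
    and Xsets_Pow: "Xp G \<subseteq> Pow (verts G)"
    and Xsets_nonempty: "Xp G \<noteq> {}"
    and Xset_superset: "S \<in> Xp G \<Longrightarrow> S \<subseteq> S' \<Longrightarrow> S' \<subseteq> verts G \<Longrightarrow> S' \<in> Xp G"

lemma superset_family_if_super_X_param:
  assumes "super_X_param Xp" "is_graph G"
  shows "superset_family Xp G"
proof
  show "finite (verts G)" using assms(2) unfolding is_graph_def by blast
  note Xp = mp[OF spec[OF conjunct1[OF assms(1)[unfolded super_X_param_def]], of G] assms(2)]
  then show "Xp G \<subseteq> Pow (verts G)" "Xp G \<noteq> {}" by simp_all
  show "S \<in> Xp G \<Longrightarrow> S \<subseteq> S' \<Longrightarrow> S' \<subseteq> verts G \<Longrightarrow> S' \<in> Xp G" for S S'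
    using Xp by blast
qed

context superset_family
begin

lemma Xset_subset_verts: "S \<in> Xp G \<Longrightarrow> S \<subseteq> verts G"
  using Xsets_Pow by blast

lemma finite_Xsets: "finite (Xp G)"
  using rev_finite_subset[OF _ Xsets_Pow] finite_verts by simp

lemma finite_Xset: "S \<in> Xp G \<Longrightarrow> finite S"
  using finite_verts Xset_subset_verts finite_subset by blast

lemma verts_Xset: "verts G \<in> Xp G"
  using Xsets_nonempty Xset_superset Xset_subset_verts by blast

lemma Xnum_le_card: "S \<in> Xp G \<Longrightarrow> Xnum Xp G \<le> card S"
  unfolding Xnum_def using finite_Xsets by simp

lemma obtain_minimum_Xset:
  obtains M where "minimum_Xset Xp G M"
proof -
  have "Xnum Xp G \<in> card ` Xp G"
    unfolding Xnum_def using finite_Xsets Xsets_nonempty by simp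
  then show thesis using that unfolding minimum_Xset_def by auto
qed

lemma minimal_Xset_subset:
  assumes "S \<in> Xp G"
  obtains A where "A \<subseteq> S" "minimal_Xset Xp G A"
proof -
  obtain A where "A \<in> Xp G" "A \<subseteq> S" "\<forall>T\<in>Xp G. T \<subseteq> A \<longrightarrow> A = T"
    using finite_has_minimal2[OF finite_Xsets assms] by auto
  then show thesis by (intro that) (auto simp: minimal_Xset_def)
qed

lemma minimum_Xset_minimal:
  assumes "minimum_Xset Xp G M"
  shows "minimal_Xset Xp G M"
  unfolding minimal_Xset_def
proof (intro conjI ballI impI)
  show M: "M \<in> Xp G" using assms unfolding minimum_Xset_def by simp
  fix T assume "T \<in> Xp G" "T \<subseteq> M"
  with assms show "T = M"
    using card_seteq[OF finite_Xset[OF M]] Xnum_le_card unfolding minimum_Xset_def by simp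
qed

lemma card_minimal_le_Xupper: "minimal_Xset Xp G A \<Longrightarrow> card A \<le> Xupper Xp G"
proof -
  have "finite {S. minimal_Xset Xp G S}"
    using finite_Xsets by (rule rev_finite_subset) (auto simp: minimal_Xset_def)
  then show "minimal_Xset Xp G A \<Longrightarrow> card A \<le> Xupper Xp G"
    unfolding Xupper_def by simp
qed

lemma obtain_minimal_Xset_card_Xupper:
  obtains A where "minimal_Xset Xp G A" "card A = Xupper Xp G"
proof -
  obtain M where "minimum_Xset Xp G M" by (rule obtain_minimum_Xset)
  then have "{S. minimal_Xset Xp G S} \<noteq> {}" using minimum_Xset_minimal by blast
  moreover have "finite {S. minimal_Xset Xp G S}"
    using finite_Xsets by (rule rev_finite_subset) (auto simp: minimal_Xset_def)
  ultimately have "Xupper Xp G \<in> card ` {S. minimal_Xset Xp G S}"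
    unfolding Xupper_def by simp
  then show thesis using that by auto
qed

lemma symp_TAR_adj: "symp (TAR_adj Xp G k)"
  unfolding symp_def TAR_adj_def by (simp add: Un_commute)

lemma TAR_reach_sym: "(TAR_adj Xp G k)\<^sup>*\<^sup>* S T \<Longrightarrow> (TAR_adj Xp G k)\<^sup>*\<^sup>* T S"
  using sympD[OF symp_rtranclp[OF symp_TAR_adj]] .

lemma TAR_reach_superset:
  assumes "A \<in> Xp G" "A \<subseteq> B" "B \<subseteq> verts G" "card B \<le> k"
  shows "(TAR_adj Xp G k)\<^sup>*\<^sup>* A B"
proof -
  have "finite B" using assms(3) finite_verts finite_subset by blast
  have "(TAR_adj Xp G k)\<^sup>*\<^sup>* A (A \<union> F)" if "F \<subseteq> B - A" for F
    using finite_subset[OF that finite_Diff[OF \<open>finite B\<close>]] that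
  proof (induction F rule: finite_induct)
    case (insert x F)
    have sub: "A \<union> F \<subseteq> B" "A \<union> insert x F \<subseteq> B" using insert.prems assms(2) by auto
    have "card (A \<union> F) \<le> k" "card (A \<union> insert x F) \<le> k"
      using card_mono[OF \<open>finite B\<close> sub(1)] card_mono[OF \<open>finite B\<close> sub(2)] assms(4) by linarith+
    moreover have "A \<union> F \<in> Xp G" "A \<union> insert x F \<in> Xp G"
      by (rule Xset_superset[OF assms(1)], use sub assms(3) in auto)+
    moreover have "(A \<union> F - (A \<union> insert x F)) \<union> (A \<union> insert x F - (A \<union> F)) = {x}"
      using insert.hyps(2) insert.prems by auto
    ultimately have "TAR_adj Xp G k (A \<union> F) (A \<union> insert x F)"
      unfolding TAR_adj_def TAR_verts_def by simp
    moreover have "(TAR_adj Xp G k)\<^sup>*\<^sup>* A (A \<union> F)"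
      using insert.IH insert.prems by simp
    ultimately show ?case by simp
  qed simp
  from this[of "B - A"] show ?thesis using assms(2) by (simp add: Un_absorb1)
qed

lemma TAR_connected_if_hub:
  assumes "H \<in> TAR_verts Xp G k" "\<And>S. S \<in> TAR_verts Xp G k \<Longrightarrow> (TAR_adj Xp G k)\<^sup>*\<^sup>* S H"
  shows "TAR_connected Xp G k"
  unfolding TAR_connected_def
proof (intro conjI ballI)
  show "TAR_verts Xp G k \<noteq> {}" using assms(1) by blast
  fix S T assume "S \<in> TAR_verts Xp G k" "T \<in> TAR_verts Xp G k"
  then show "(TAR_adj Xp G k)\<^sup>*\<^sup>* S T"
    using rtranclp_trans[OF assms(2) TAR_reach_sym[OF assms(2)]] by blast
qed

lemma minimal_Xset_isolated:
  assumes "minimal_Xset Xp G M" "card M = k"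
  shows "\<not> TAR_adj Xp G k M T"
proof
  assume adj: "TAR_adj Xp G k M T"
  then have T: "T \<in> Xp G" "card T \<le> k" and diff: "card ((M - T) \<union> (T - M)) = 1"
    unfolding TAR_adj_def TAR_verts_def by auto
  from diff show False
  proof (cases rule: card_sym_diff_eq_1_cases)
    case (1 x)
    then show False using assms(1) T(1) unfolding minimal_Xset_def by blast
  next
    case (2 x)
    have "finite M" using assms(1) finite_Xset unfolding minimal_Xset_def by blast
    then show False using 2 T(2) assms(2) by simp
  qed
qed

lemma not_TAR_connected_at_minimal:
  assumes "minimal_Xset Xp G M" "card M = k" "T \<in> Xp G" "card T \<le> k" "T \<noteq> M"
  shows "\<not> TAR_connected Xp G k"
proof
  assume "TAR_connected Xp G k"
  moreover have "M \<in> TAR_verts Xp G k" "T \<in> TAR_verts Xp G k"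
    using assms unfolding minimal_Xset_def TAR_verts_def by auto
  ultimately have "(TAR_adj Xp G k)\<^sup>*\<^sup>* M T" unfolding TAR_connected_def by blast
  then show False
    using assms(5) minimal_Xset_isolated[OF assms(1,2)] by (blast elim: converse_rtranclpE)
qed

lemma TAR_connected_if_card_verts_le:
  assumes "card (verts G) \<le> k"
  shows "TAR_connected Xp G k"
proof (rule TAR_connected_if_hub)
  show "verts G \<in> TAR_verts Xp G k" using verts_Xset assms unfolding TAR_verts_def by simp
  fix S assume "S \<in> TAR_verts Xp G k"
  then show "(TAR_adj Xp G k)\<^sup>*\<^sup>* S (verts G)"
    using TAR_reach_superset[OF _ Xset_subset_verts order_refl assms] unfolding TAR_verts_def by simp
qed

lemma TAR_connected_if_Xupper_Xnum_le:
  assumes "Xupper Xp G + Xnum Xp G \<le> k"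
  shows "TAR_connected Xp G k"
proof -
  obtain M where M: "M \<in> Xp G" "card M = Xnum Xp G"
    using obtain_minimum_Xset unfolding minimum_Xset_def by blast
  show ?thesis
  proof (rule TAR_connected_if_hub)
    show "M \<in> TAR_verts Xp G k" using M assms unfolding TAR_verts_def by simp
  next
    fix S assume "S \<in> TAR_verts Xp G k"
    then have S: "S \<in> Xp G" "card S \<le> k" unfolding TAR_verts_def by auto
    obtain A where A: "A \<subseteq> S" "minimal_Xset Xp G A" using minimal_Xset_subset[OF S(1)] .
    have AX: "A \<in> Xp G" using A(2) unfolding minimal_Xset_def by simp
    have AM: "A \<union> M \<subseteq> verts G" "card (A \<union> M) \<le> k"
      using Xset_subset_verts[OF AX] Xset_subset_verts[OF M(1)] card_Un_le[of A M]
        card_minimal_le_Xupper[OF A(2)] M(2) assms by auto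
    have "(TAR_adj Xp G k)\<^sup>*\<^sup>* S A"
      using TAR_reach_sym[OF TAR_reach_superset[OF AX A(1) Xset_subset_verts[OF S(1)] S(2)]] .
    also have "(TAR_adj Xp G k)\<^sup>*\<^sup>* A (A \<union> M)"
      using TAR_reach_superset[OF AX _ AM] by simp
    also have "(TAR_adj Xp G k)\<^sup>*\<^sup>* (A \<union> M) M"
      using TAR_reach_sym[OF TAR_reach_superset[OF M(1) _ AM]] by simp
    finally show "(TAR_adj Xp G k)\<^sup>*\<^sup>* S M" .
  qed
qed

lemma TAR_connected_if_unique_minimal:
  assumes "minimal_Xset Xp G M" "\<And>A. minimal_Xset Xp G A \<Longrightarrow> A = M" "card M \<le> k"
  shows "TAR_connected Xp G k"
proof (rule TAR_connected_if_hub)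
  have MX: "M \<in> Xp G" using assms(1) unfolding minimal_Xset_def by simp
  then show "M \<in> TAR_verts Xp G k" using assms(3) unfolding TAR_verts_def by simp
  fix S assume "S \<in> TAR_verts Xp G k"
  then have S: "S \<in> Xp G" "card S \<le> k" unfolding TAR_verts_def by auto
  obtain A where "A \<subseteq> S" "minimal_Xset Xp G A" using minimal_Xset_subset[OF S(1)] .
  then have "M \<subseteq> S" using assms(2) by blast
  then show "(TAR_adj Xp G k)\<^sup>*\<^sup>* S M"
    using TAR_reach_sym[OF TAR_reach_superset[OF MX _ Xset_subset_verts[OF S(1)] S(2)]] by simp
qed

lemma x0_le: "(\<And>j. k \<le> j \<Longrightarrow> TAR_connected Xp G j) \<Longrightarrow> x0 Xp G \<le> k"
  unfolding x0_def by (rule Least_le) blast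

lemma x0_le_card_verts: "x0 Xp G \<le> card (verts G)"
  by (rule x0_le) (rule TAR_connected_if_card_verts_le)

lemma TAR_connected_if_x0_le:
  assumes "x0 Xp G \<le> k"
  shows "TAR_connected Xp G k"
proof -
  have "\<forall>j\<ge>x0 Xp G. TAR_connected Xp G j"
    unfolding x0_def
    by (rule LeastI[of _ "card (verts G)"]) (simp add: TAR_connected_if_card_verts_le)
  then show ?thesis using assms by simp
qed

lemma x0_under_le: "TAR_connected Xp G k \<Longrightarrow> x0_under Xp G \<le> k"
  unfolding x0_under_def by (rule Least_le)

lemma TAR_connected_x0_under: "TAR_connected Xp G (x0_under Xp G)"
  unfolding x0_under_def by (rule LeastI[of _ "x0 Xp G"]) (rule TAR_connected_if_x0_le, simp)

lemma Xnum_le_if_TAR_connected: "TAR_connected Xp G k \<Longrightarrow> Xnum Xp G \<le> k"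
  unfolding TAR_connected_def TAR_verts_def using Xnum_le_card le_trans by blast

lemma x0_le_Xupper_add_Xnum: "x0 Xp G \<le> Xupper Xp G + Xnum Xp G"
  by (rule x0_le) (rule TAR_connected_if_Xupper_Xnum_le)

lemma Xnum_le_x0_under: "Xnum Xp G \<le> x0_under Xp G"
  using Xnum_le_if_TAR_connected TAR_connected_x0_under .

lemma x0_under_le_x0: "x0_under Xp G \<le> x0 Xp G"
  using x0_under_le TAR_connected_if_x0_le by blast

lemma x0_le_Xnum_if_unique_minimal:
  assumes "\<exists>!M. minimal_Xset Xp G M"
  shows "x0 Xp G \<le> Xnum Xp G"
proof -
  obtain M where M: "minimal_Xset Xp G M" "\<And>A. minimal_Xset Xp G A \<Longrightarrow> A = M"
    using assms by blast
  moreover obtain N where "minimum_Xset Xp G N" by (rule obtain_minimum_Xset)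
  ultimately have "card M = Xnum Xp G"
    using minimum_Xset_minimal unfolding minimum_Xset_def by blast
  then show ?thesis using x0_le TAR_connected_if_unique_minimal[OF M] by metis
qed

lemma Xupper_less_x0_if_two_minimal:
  assumes "\<exists>S T. minimal_Xset Xp G S \<and> minimal_Xset Xp G T \<and> S \<noteq> T"
  shows "Xupper Xp G < x0 Xp G"
proof -
  obtain A where A: "minimal_Xset Xp G A" "card A = Xupper Xp G"
    by (rule obtain_minimal_Xset_card_Xupper)
  obtain B where B: "minimal_Xset Xp G B" "B \<noteq> A" using assms by blast
  have "\<not> TAR_connected Xp G (Xupper Xp G)"
    by (rule not_TAR_connected_at_minimal[OF A, where T = B])
      (use B card_minimal_le_Xupper in \<open>auto simp: minimal_Xset_def\<close>)
  then show ?thesis using TAR_connected_if_x0_le by (meson not_le)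
qed

lemma Xnum_less_x0_under_if_two_minimum:
  assumes "\<exists>S T. minimum_Xset Xp G S \<and> minimum_Xset Xp G T \<and> S \<noteq> T"
  shows "Xnum Xp G < x0_under Xp G"
proof -
  obtain S T where ST: "minimum_Xset Xp G S" "minimum_Xset Xp G T" "S \<noteq> T"
    using assms by blast
  have "\<not> TAR_connected Xp G (Xnum Xp G)"
    by (rule not_TAR_connected_at_minimal[OF minimum_Xset_minimal[OF ST(1)], where T = T])
      (use ST in \<open>auto simp: minimum_Xset_def\<close>)
  then show ?thesis
    using TAR_connected_x0_under Xnum_le_x0_under le_neq_implies_less by metis
qed

end

theorem proposition2p31:
  fixes Xp :: "'a graph \<Rightarrow> 'a set set" and G :: "'a graph" and n :: nat
  assumes "super_X_param Xp" and "is_graph G" and "n = card (verts G)"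
  shows "(Xnum Xp G \<le> x0_under Xp G \<and> x0_under Xp G \<le> x0 Xp G)
    \<and> ((\<exists>!S. minimal_Xset Xp G S) \<longrightarrow>
           Xnum Xp G = x0_under Xp G \<and> x0_under Xp G = x0 Xp G)
    \<and> ((\<exists>S T. minimal_Xset Xp G S \<and> minimal_Xset Xp G T \<and> S \<noteq> T) \<longrightarrow>
           Xupper Xp G + 1 \<le> x0 Xp G \<and> x0 Xp G \<le> min (Xupper Xp G + Xnum Xp G) n)
    \<and> ((\<exists>S T. minimum_Xset Xp G S \<and> minimum_Xset Xp G T \<and> S \<noteq> T) \<longrightarrow>
           Xnum Xp G + 1 \<le> x0_under Xp G)"
proof -
  interpret superset_family Xp G
    using superset_family_if_super_X_param assms(1,2) .
  have two_minimal_bounds: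
    "Xupper Xp G + 1 \<le> x0 Xp G \<and> x0 Xp G \<le> min (Xupper Xp G + Xnum Xp G) n" if "\<exists>S T. minimal_Xset Xp G S \<and> minimal_Xset Xp G T \<and> S \<noteq> T"
    using Xupper_less_x0_if_two_minimal[OF that] x0_le_Xupper_add_Xnum x0_le_card_verts assms(3)
    by simp
  have unique_minimal_bounds: "Xnum Xp G = x0_under Xp G \<and> x0_under Xp G = x0 Xp G"
    if "\<exists>!S. minimal_Xset Xp G S"
    using x0_le_Xnum_if_unique_minimal[OF that] Xnum_le_x0_under x0_under_le_x0 by simp
  show ?thesis
    using Xnum_le_x0_under x0_under_le_x0 unique_minimal_bounds two_minimal_bounds
      Xnum_less_x0_under_if_two_minimum
    by (simp add: Suc_le_eq)
qed

end
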